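(* Let $\alpha\ge1.5$ and, for $y\ge\sqrt3/2$, $$g_\alpha(y)=\sum_{k,l\in\mathbb{Z}}\exp\!\Big(-\tfrac{\pi\alpha}{y}\big(k^2+kl+(\tfrac14+y^2)l^2\big)\Big)\cos\big(2\pi(ka_2(y)-la_1(y))\big),$$ with $a_1(y)=\tfrac14+\tfrac1{16y^2}$, $a_2(y)=\tfrac12-\tfrac1{8y^2}$. Then $g_\alpha$ attains its maximum over $[\sqrt3/2,\infty)$ in the interval $\big[\tfrac{\sqrt3}2,\tfrac{\sqrt3}2+\tfrac1{4\sqrt\alpha}\big]$. *)

theory Defs
  imports "HOL-Analysis.Analysis"
begin

definition a1 :: "real \<Rightarrow> real" where
  "a1 y = 1/4 + 1/(16 * y^2)"

definition a2 :: "real \<Rightarrow> real" where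
  "a2 y = 1/2 - 1/(8 * y^2)"

definition g :: "real \<Rightarrow> real \<Rightarrow> real" where
  "g \<alpha> y = (\<Sum>\<^sub>\<infinity>(k,l)\<in>(UNIV :: (int \<times> int) set).
      exp (- (pi * \<alpha> / y) * (real_of_int k ^ 2 + real_of_int k * real_of_int l
                               + (1/4 + y^2) * real_of_int l ^ 2))
      * cos (2 * pi * (real_of_int k * a2 y - real_of_int l * a1 y)))"

end

theory Submission
  imports Defs
begin

(* Write s = pi alpha / y and q = exp (-s). The quadratic form is (k + l/2)^2 + y^2 l^2, so
   the lattice sum is dominated by the terms with |l| <= 1 and |k + l/2| <= 1:
     g(y) = 1 - 2 q cos (pi / (4 y^2)) - 4 exp (-s (y^2 + 1/4)) sin (pi / (8 y^2)) + O(q^4 + exp (-3 pi alpha)).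
   At y0 = sqrt 3 / 2 this gives g >= 1 - 27/8 q0 with q0 = exp (-2 pi alpha / sqrt 3). For
   y >= y1 = y0 + 1 / (4 sqrt alpha) the sine term is nonpositive and q exceeds q0 by a factor
   of at least exp (pi sqrt alpha / (4 y0 y1)) > e, so g(y) <= 1 - 7/2 q0 + q0/8 <= g(y0);
   once s <= 1/4 the row l = 0 is instead compared with the alternating theta series
   1 + 2 sum (-1)^k exp (-s k^2) <= 1/2. By continuity g attains its maximum over the compact
   interval, and hence over [sqrt 3 / 2, oo), inside the interval. *)

section \<open>Sums over the integers and majorants\<close>

lemma infsum_int_split:
  fixes f :: "int \<Rightarrow> 'a::banach"
  assumes "f summable_on UNIV"
  shows "summable (\<lambda>n. f (int n + 1))" "summable (\<lambda>n. f (- int n - 1))"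
    "infsum f UNIV = f 0 + (\<Sum>n. f (int n + 1)) + (\<Sum>n. f (- int n - 1))"
proof -
  define pos where "pos = (\<lambda>n::nat. int n + 1)"
  define neg where "neg = (\<lambda>n::nat. - int n - 1)"
  have inj: "inj pos" "inj neg" by (auto simp: inj_def pos_def neg_def)
  have UNIV_split: "UNIV = insert 0 (range pos \<union> range neg)"
  proof -
    have "k \<in> range pos" if "k > 0" for k
      using that by (intro image_eqI[of _ _ "nat (k - 1)"]) (auto simp: pos_def)
    moreover have "k \<in> range neg" if "k < 0" for k
      using that by (intro image_eqI[of _ _ "nat (- k - 1)"]) (auto simp: neg_def)
    ultimately show ?thesis by (metis UNIV_eq_I Un_iff insertCI linorder_neqE_linordered_idom)
  qed
  have disj: "range pos \<inter> range neg = {}" "0 \<notin> range pos \<union> range neg"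
    by (auto simp: pos_def neg_def)
  have sum_pos: "f summable_on range pos" and sum_neg: "f summable_on range neg"
    using assms by (auto intro: summable_on_subset_banach)
  have "(f \<circ> pos) summable_on UNIV" "(f \<circ> neg) summable_on UNIV"
    using sum_pos sum_neg by (simp_all add: summable_on_reindex[OF inj(1)] summable_on_reindex[OF inj(2)])
  hence sums: "(f \<circ> pos) sums infsum (f \<circ> pos) UNIV" "(f \<circ> neg) sums infsum (f \<circ> neg) UNIV"
    by (auto intro: has_sum_imp_sums)
  then show "summable (\<lambda>n. f (int n + 1))" "summable (\<lambda>n. f (- int n - 1))"
    by (auto simp: sums_iff pos_def neg_def o_def)
  have "infsum f UNIV = f 0 + (infsum f (range pos) + infsum f (range neg))"
    unfolding UNIV_split using disj sum_pos sum_neg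
    by (simp add: infsum_insert summable_on_Un_disjoint infsum_Un_disjoint)
  also have "infsum f (range pos) = (\<Sum>n. f (int n + 1))"
    using sums(1) by (simp add: infsum_reindex[OF inj(1)] sums_iff) (simp add: pos_def o_def)
  also have "infsum f (range neg) = (\<Sum>n. f (- int n - 1))"
    using sums(2) by (simp add: infsum_reindex[OF inj(2)] sums_iff) (simp add: neg_def o_def)
  finally show "infsum f UNIV = f 0 + (\<Sum>n. f (int n + 1)) + (\<Sum>n. f (- int n - 1))"
    by (simp add: add.assoc)
qed

lemma infsum_int_even:
  fixes f :: "int \<Rightarrow> 'a::banach"
  assumes "f summable_on UNIV" and "\<And>k. f (- k) = f k"
  shows "summable (\<lambda>n. f (int n + 1))" "infsum f UNIV = f 0 + 2 *\<^sub>R (\<Sum>n. f (int n + 1))"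
proof -
  have "f (- int n - 1) = f (int n + 1)" for n
    using assms(2)[of "int n + 1"] by (simp only: minus_add_distrib diff_conv_add_uminus)
  with infsum_int_split[OF assms(1)] show
    "summable (\<lambda>n. f (int n + 1))" "infsum f UNIV = f 0 + 2 *\<^sub>R (\<Sum>n. f (int n + 1))"
    by (simp_all add: scaleR_2)
qed

lemma summable_on_int_if_norm_summable:
  fixes f :: "int \<Rightarrow> 'a::banach"
  assumes "summable (\<lambda>n. norm (f (int n)))" "summable (\<lambda>n. norm (f (- int n)))"
  shows "f summable_on UNIV"
proof -
  have "- int (n + 1) = - int n - 1" for n by simp
  hence "summable (\<lambda>n. norm (f (- int n - 1)))"
    using summable_ignore_initial_segment[OF assms(2), of 1] by (simp only:)
  hence "(f \<circ> int) summable_on UNIV" "(f \<circ> (\<lambda>n. - int n - 1)) summable_on UNIV"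
    using assms(1) by (auto intro!: norm_summable_imp_summable_on simp: o_def)
  hence "f summable_on range int" "f summable_on range (\<lambda>n. - int n - 1)"
    by (simp_all add: summable_on_reindex inj_def)
  hence "f summable_on (range int \<union> range (\<lambda>n. - int n - 1))"
    by (rule summable_on_Un_disjoint) auto
  also have "range int \<union> range (\<lambda>n. - int n - 1) = UNIV"
  proof -
    have "k \<in> range (\<lambda>n. - int n - 1)" if "k < 0" for k
      using that by (intro image_eqI[of _ _ "nat (- k - 1)"]) auto
    thus ?thesis by (auto simp: image_iff) (metis nonneg_int_cases not_le)
  qed
  finally show ?thesis .
qed

lemma suminf_geometric_majorant:
  fixes f :: "nat \<Rightarrow> real"
  assumes "\<And>n. \<bar>f n\<bar> \<le> C * q ^ n" "0 \<le> q" "q < 1"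
  shows "summable f" "\<bar>suminf f\<bar> \<le> C / (1 - q)"
proof -
  have geom: "summable (\<lambda>n. C * q ^ n)" using assms by (intro summable_mult summable_geometric) auto
  show "summable f" by (rule summable_comparison_test'[OF geom]) (use assms(1) in auto)
  have abs: "summable (\<lambda>n. \<bar>f n\<bar>)" by (rule summable_comparison_test'[OF geom]) (use assms(1) in auto)
  have "\<bar>suminf f\<bar> \<le> (\<Sum>n. \<bar>f n\<bar>)" using summable_rabs[OF abs] by simp
  also have "\<dots> \<le> (\<Sum>n. C * q ^ n)" by (rule suminf_le[OF _ abs geom]) (use assms(1) in auto)
  also have "\<dots> = C / (1 - q)" using assms by (simp add: suminf_mult suminf_geometric divide_simps)
  finally show "\<bar>suminf f\<bar> \<le> C / (1 - q)" .
qed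

lemma exp_neg_mult_nat_square_le:
  fixes a :: real assumes "a \<ge> 0"
  shows "exp (- a * real n ^ 2) \<le> exp (- a) ^ n"
proof -
  have "real n \<le> real n ^ 2" by (cases n) (auto simp: power2_eq_square)
  hence "- a * real n ^ 2 \<le> - a * real n" using assms by (intro mult_left_mono_neg) auto
  thus ?thesis by (simp add: exp_of_nat_mult[symmetric] mult.commute)
qed

lemma exp_neg_mult_affine_nat:
  fixes s :: real
  shows "exp (- s * (real m + real k * real n)) = exp (- s) ^ m * (exp (- s) ^ k) ^ n"
proof -
  have "exp (- s * (real m + real k * real n)) = exp (real m * (-s)) * exp (real n * (real k * (-s)))"
    by (subst exp_add[symmetric]) (simp add: algebra_simps)
  also have "\<dots> = exp (- s) ^ m * (exp (- s) ^ k) ^ n" by (simp only: exp_of_nat_mult)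
  finally show ?thesis .
qed

lemma gaussian_summable_on_int:
  fixes a :: real assumes "a > 0"
  shows "(\<lambda>k::int. exp (- a * of_int k ^ 2)) summable_on UNIV"
proof (rule summable_on_int_if_norm_summable)
  have "summable (\<lambda>n::nat. exp (- a) ^ n)" using assms by (intro summable_geometric) auto
  hence "summable (\<lambda>n::nat. exp (- a * real n ^ 2))"
    by (rule summable_comparison_test'[where N=0]) (use exp_neg_mult_nat_square_le assms in auto)
  thus "summable (\<lambda>n. norm (exp (- a * of_int (int n) ^ 2)))"
    "summable (\<lambda>n. norm (exp (- a * of_int (- int n) ^ 2)))" by simp_all
qed

lemma gaussian_infsum_int_le:
  fixes a :: real assumes "a > 0"
  shows "(\<Sum>\<^sub>\<infinity>k::int. exp (- a * of_int k ^ 2)) \<le> (2 + a) / a"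
proof -
  define q where "q = exp (- a)"
  have q: "0 \<le> q" "q < 1" using assms by (auto simp: q_def)
  have "\<bar>exp (- a * of_int (int n + 1) ^ 2)\<bar> \<le> q * q ^ n" for n
    using exp_neg_mult_nat_square_le[of a "Suc n"] assms by (simp add: q_def add.commute)
  note tail = suminf_geometric_majorant(2)[OF this q]
  have "(\<Sum>\<^sub>\<infinity>k::int. exp (- a * of_int k ^ 2)) = 1 + 2 * (\<Sum>n. exp (- a * of_int (int n + 1) ^ 2))"
    using infsum_int_even(2)[OF gaussian_summable_on_int[OF assms]] by simp
  also have "\<dots> \<le> 1 + 2 * (q / (1 - q))" using tail by simp
  also have "\<dots> = (1 + q) / (1 - q)" using q by (simp add: field_simps)
  also have "\<dots> \<le> (2 + a) / a"
  proof -
    have "q * (1 + a) \<le> 1"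
      using exp_ge_add_one_self[of a] assms by (simp add: q_def exp_minus field_simps)
    thus ?thesis using q assms by (simp add: field_simps)
  qed
  finally show ?thesis .
qed

lemma summable_on_product_nonneg:
  fixes f g :: "'a \<Rightarrow> real"
  assumes "f summable_on A" "g summable_on B" "\<And>x. x \<in> A \<Longrightarrow> f x \<ge> 0" "\<And>y. y \<in> B \<Longrightarrow> g y \<ge> 0"
  shows "(\<lambda>(x,y). f x * g y) summable_on A \<times> B"
proof (rule summable_on_SigmaI[where g = "\<lambda>x. f x * infsum g B"])
  show "((\<lambda>y. (\<lambda>(x,y). f x * g y) (x, y)) has_sum f x * infsum g B) B" for x
    using has_sum_cmult_right[OF has_sum_infsum[OF assms(2)], of "f x"] by simp
  show "(\<lambda>x. f x * infsum g B) summable_on A"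
    using summable_on_cmult_left[OF assms(1)] by simp
qed (use assms in auto)

lemma summable_on_norm_majorant:
  fixes f :: "'a \<Rightarrow> 'b::banach"
  assumes "M summable_on A" "\<And>x. x \<in> A \<Longrightarrow> norm (f x) \<le> M x"
  shows "f summable_on A"
  by (rule abs_summable_summable[OF Infinite_Sum.abs_summable_on_comparison_test'[OF assms]])

lemma norm_infsum_le_majorant:
  fixes f :: "'a \<Rightarrow> 'b::banach"
  assumes "M summable_on A" "\<And>x. x \<in> A \<Longrightarrow> norm (f x) \<le> M x"
  shows "norm (infsum f A) \<le> infsum M A"
proof -
  have abs: "(\<lambda>x. norm (f x)) summable_on A" by (rule Infinite_Sum.abs_summable_on_comparison_test'[OF assms])
  have "norm (infsum f A) \<le> infsum (\<lambda>x. norm (f x)) A" using norm_infsum_bound[of f A] abs by simp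
  also have "\<dots> \<le> infsum M A" by (rule infsum_mono[OF abs assms(1)]) (use assms(2) in auto)
  finally show ?thesis .
qed

section \<open>Decomposition of the lattice sum into rows\<close>

lemma abs_exp_mult_cos_le: "\<bar>exp u * cos v\<bar> \<le> exp (u :: real)"
  using mult_left_le[OF abs_cos_le_one[of v], of "exp u"] by (simp add: abs_mult)

definition g_summand :: "real \<Rightarrow> real \<Rightarrow> int \<times> int \<Rightarrow> real" where
  "g_summand \<alpha> y = (\<lambda>(k,l). exp (- (pi * \<alpha> / y) * (of_int k ^ 2 + of_int k * of_int l
                               + (1/4 + y^2) * of_int l ^ 2))
      * cos (2 * pi * (of_int k * a2 y - of_int l * a1 y)))"

definition g_row :: "real \<Rightarrow> real \<Rightarrow> int \<Rightarrow> real" where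
  "g_row \<alpha> y l = (\<Sum>\<^sub>\<infinity>k. g_summand \<alpha> y (k, l))"

lemma g_eq_infsum_summand: "g \<alpha> y = infsum (g_summand \<alpha> y) UNIV"
  unfolding g_def g_summand_def by simp

lemma abs_g_summand_le:
  assumes "\<alpha> \<ge> 0" "y > 0"
  shows "\<bar>g_summand \<alpha> y (k,l)\<bar>
    \<le> exp (- (pi * \<alpha> / y / 4) * of_int k ^ 2) * exp (- (pi * \<alpha> / y * (y^2 - 1/12)) * of_int l ^ 2)"
proof -
  define K L where "K = real_of_int k" and "L = real_of_int l"
  have "K^2 + K*L + (1/4 + y^2) * L^2 = K^2/4 + (y^2 - 1/12) * L^2 + 3/4 * (K + 2/3*L)^2"
    by (simp add: power2_eq_square algebra_simps)
  hence "K^2/4 + (y^2 - 1/12) * L^2 \<le> K^2 + K*L + (1/4 + y^2) * L^2" by simp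
  hence "pi * \<alpha> / y * (K^2/4 + (y^2 - 1/12) * L^2) \<le> pi * \<alpha> / y * (K^2 + K*L + (1/4 + y^2) * L^2)"
    using assms by (intro mult_left_mono) auto
  moreover have "\<bar>g_summand \<alpha> y (k,l)\<bar> \<le> exp (- (pi * \<alpha> / y) * (K^2 + K*L + (1/4 + y^2) * L^2))"
    unfolding g_summand_def K_def L_def by (simp add: abs_mult)
  ultimately have "\<bar>g_summand \<alpha> y (k,l)\<bar> \<le> exp (- (pi * \<alpha> / y) * (K^2/4 + (y^2 - 1/12) * L^2))"
    by (smt (verit) exp_le_cancel_iff mult_minus_left)
  also have "\<dots> = exp (- (pi * \<alpha> / y / 4) * K ^ 2) * exp (- (pi * \<alpha> / y * (y^2 - 1/12)) * L ^ 2)"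
    by (simp add: exp_add[symmetric] algebra_simps)
  finally show ?thesis unfolding K_def L_def .
qed

lemma g_summand_uminus: "g_summand \<alpha> y (k, -l) = g_summand \<alpha> y (-k, l)"
proof -
  have "cos (2 * pi * (u * a2 y + v * a1 y)) = cos (2 * pi * (- u * a2 y - v * a1 y))" for u v
    by (subst cos_minus[symmetric]) (simp add: algebra_simps)
  from this[of "of_int k" "of_int l"] show ?thesis unfolding g_summand_def by (simp add: algebra_simps)
qed

lemma g_row_uminus: "g_row \<alpha> y (-l) = g_row \<alpha> y l"
proof -
  have "g_row \<alpha> y (-l) = infsum ((\<lambda>k. g_summand \<alpha> y (k, l)) \<circ> uminus) UNIV"
    unfolding g_row_def by (simp add: g_summand_uminus o_def)
  also have "\<dots> = infsum (\<lambda>k. g_summand \<alpha> y (k, l)) (range uminus)"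
    by (rule infsum_reindex[symmetric]) auto
  also have "range uminus = (UNIV :: int set)" by (simp add: surj_def)
  finally show ?thesis unfolding g_row_def .
qed

locale g_params =
  fixes \<alpha> y :: real
  assumes \<alpha>_pos: "\<alpha> > 0" and y_pos: "y > 0" and y_square_ge: "y^2 \<ge> 3/4"
begin

definition "s = pi * \<alpha> / y"
definition "nome = exp (- s)"
definition "a = s / 4"
definition "b = s * (y^2 - 1/12)"
definition "theta_a = (\<Sum>\<^sub>\<infinity>k::int. exp (- a * of_int k ^ 2))"

lemma s_pos: "s > 0" using \<alpha>_pos y_pos by (simp add: s_def)
lemma a_pos: "a > 0" using s_pos by (simp add: a_def)
lemma b_pos: "b > 0" using s_pos y_square_ge by (simp add: b_def)
lemma nome_pos: "nome > 0" and nome_less_1: "nome < 1" using s_pos by (auto simp: nome_def)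

lemma theta_a_le: "theta_a \<le> (2 + a) / a"
  unfolding theta_a_def by (rule gaussian_infsum_int_le[OF a_pos])

lemma theta_a_nonneg: "theta_a \<ge> 0"
  unfolding theta_a_def by (rule infsum_nonneg) auto

lemma abs_summand_le: "\<bar>g_summand \<alpha> y (k,l)\<bar> \<le> exp (- a * of_int k ^ 2) * exp (- b * of_int l ^ 2)"
  using abs_g_summand_le[of \<alpha> y] \<alpha>_pos y_pos by (simp add: a_def b_def s_def)

lemma summable_summand: "g_summand \<alpha> y summable_on UNIV"
proof -
  have "(\<lambda>(k,l). exp (- a * of_int k ^ 2) * exp (- b * of_int l ^ 2)) summable_on (UNIV :: (int \<times> int) set)"
    using summable_on_product_nonneg[OF gaussian_summable_on_int[OF a_pos] gaussian_summable_on_int[OF b_pos]]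
    by simp
  thus ?thesis by (rule summable_on_norm_majorant) (use abs_summand_le in auto)
qed

lemma summable_row_terms: "(\<lambda>k. g_summand \<alpha> y (k,l)) summable_on UNIV"
  by (rule summable_on_norm_majorant[OF summable_on_cmult_left[OF gaussian_summable_on_int[OF a_pos]]])
     (use abs_summand_le in simp)

lemma abs_row_le: "\<bar>g_row \<alpha> y l\<bar> \<le> theta_a * exp (- b * of_int l ^ 2)"
proof -
  have "norm (g_row \<alpha> y l) \<le> (\<Sum>\<^sub>\<infinity>k. exp (- a * of_int k ^ 2) * exp (- b * of_int l ^ 2))"
    unfolding g_row_def
    by (rule norm_infsum_le_majorant[OF summable_on_cmult_left[OF gaussian_summable_on_int[OF a_pos]]])
       (use abs_summand_le in simp)
  also have "\<dots> = theta_a * exp (- b * of_int l ^ 2)"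
    unfolding theta_a_def by (rule infsum_cmult_left) (rule gaussian_summable_on_int[OF a_pos])
  finally show ?thesis by simp
qed

lemma summable_rows: "g_row \<alpha> y summable_on UNIV"
  by (rule summable_on_norm_majorant[OF summable_on_cmult_right[OF gaussian_summable_on_int[OF b_pos]]])
     (use abs_row_le in simp)

lemma g_eq_infsum_rows: "g \<alpha> y = infsum (g_row \<alpha> y) UNIV"
proof -
  have sum: "(\<lambda>(k,l). g_summand \<alpha> y (k,l)) summable_on (UNIV \<times> UNIV)" using summable_summand by simp
  have "g \<alpha> y = (\<Sum>\<^sub>\<infinity>k. \<Sum>\<^sub>\<infinity>l. g_summand \<alpha> y (k,l))"
    unfolding g_eq_infsum_summand using infsum_Sigma'_banach[OF sum] by simp
  also have "\<dots> = (\<Sum>\<^sub>\<infinity>l. \<Sum>\<^sub>\<infinity>k. g_summand \<alpha> y (k,l))"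
    by (rule infsum_swap_banach) (use sum in simp_all)
  finally show ?thesis unfolding g_row_def by (simp add: fun_eq_iff)
qed

lemma abs_row_tail_le:
  "\<bar>\<Sum>n. g_row \<alpha> y (int n + 2)\<bar> \<le> theta_a * exp (- 4 * b) / (1 - exp (- b))"
proof -
  have "\<bar>g_row \<alpha> y (int n + 2)\<bar> \<le> (theta_a * exp (- 4 * b)) * exp (- b) ^ n" for n
  proof -
    have "4 + real n \<le> of_int (int n + 2) ^ 2" by (simp add: power2_eq_square algebra_simps)
    hence "b * (4 + real n) \<le> b * of_int (int n + 2) ^ 2" using b_pos by (intro mult_left_mono) auto
    hence "- b * of_int (int n + 2) ^ 2 \<le> - 4 * b + real n * (- b)" by (simp add: algebra_simps)
    hence "exp (- b * of_int (int n + 2) ^ 2) \<le> exp (- 4 * b) * exp (- b) ^ n"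
      by (simp add: exp_add[symmetric] exp_of_nat_mult[symmetric])
    thus ?thesis
      using abs_row_le[of "int n + 2"] mult_left_mono[OF _ theta_a_nonneg] by (fastforce simp: mult.assoc)
  qed
  moreover have "0 \<le> exp (- b)" "exp (- b) < 1" using b_pos by auto
  ultimately show ?thesis by (rule suminf_geometric_majorant)
qed

lemma g_eq_rows_decomp:
  "g \<alpha> y = g_row \<alpha> y 0 + 2 * g_row \<alpha> y 1 + 2 * (\<Sum>n. g_row \<alpha> y (int n + 2))"
proof -
  note even = infsum_int_even[OF summable_rows g_row_uminus]
  have "(\<Sum>n. g_row \<alpha> y (int n + 1)) = g_row \<alpha> y 1 + (\<Sum>n. g_row \<alpha> y (int (Suc n) + 1))"
    using suminf_split_head[OF even(1)] by simp
  also have "(\<lambda>n. g_row \<alpha> y (int (Suc n) + 1)) = (\<lambda>n. g_row \<alpha> y (int n + 2))"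
    by (simp add: add.commute)
  finally show ?thesis using even(2) g_eq_infsum_rows by (simp add: algebra_simps)
qed

end

section \<open>The rows \<open>l = 0\<close> and \<open>l = \<plusminus>1\<close>\<close>

definition leading_gain :: "real \<Rightarrow> real \<Rightarrow> real" where
  "leading_gain \<alpha> y = 2 * exp (- (pi * \<alpha> / y)) * cos (pi / (4 * y^2))
     - 2 * (exp (- (pi * \<alpha> / y)) ^ 4 / (1 - exp (- (pi * \<alpha> / y)) ^ 5))"

context g_params
begin

lemma summand_row0: "g_summand \<alpha> y (k, 0) = exp (- s * of_int k ^ 2) * cos (2 * pi * of_int k * a2 y)"
  unfolding g_summand_def s_def by (simp add: algebra_simps)

lemma summand_row1:
  "g_summand \<alpha> y (k, 1) = exp (- s * ((of_int k + 1/2) ^ 2 + y^2)) * cos (2 * pi * (of_int k * a2 y - a1 y))"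
  unfolding g_summand_def s_def by (simp add: algebra_simps power2_eq_square)

lemma row0_eq: "summable (\<lambda>n. g_summand \<alpha> y (int n + 1, 0))"
  "g_row \<alpha> y 0 = 1 + 2 * (\<Sum>n. g_summand \<alpha> y (int n + 1, 0))"
proof -
  have "g_summand \<alpha> y (- k, 0) = g_summand \<alpha> y (k, 0)" for k
    using cos_minus[of "2 * pi * of_int k * a2 y"] by (simp add: summand_row0)
  from infsum_int_even[OF summable_row_terms[of 0] this]
  show "summable (\<lambda>n. g_summand \<alpha> y (int n + 1, 0))"
    "g_row \<alpha> y 0 = 1 + 2 * (\<Sum>n. g_summand \<alpha> y (int n + 1, 0))"
    by (simp_all add: g_row_def summand_row0)
qed

lemma abs_row0_approx: "\<bar>g_row \<alpha> y 0 - (1 + 2 * nome * cos (2 * pi * a2 y))\<bar> \<le> 2 * (nome^4 / (1 - nome^5))"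
proof -
  have head: "(\<Sum>n. g_summand \<alpha> y (int n + 1, 0))
      = nome * cos (2 * pi * a2 y) + (\<Sum>n. g_summand \<alpha> y (int (Suc n) + 1, 0))"
    using suminf_split_head[OF row0_eq(1)] by (simp add: summand_row0 nome_def)
  have "\<bar>g_summand \<alpha> y (int (Suc n) + 1, 0)\<bar> \<le> nome^4 * (nome^5)^n" for n
  proof -
    have "\<bar>g_summand \<alpha> y (int (Suc n) + 1, 0)\<bar> \<le> exp (- s * of_int (int (Suc n) + 1) ^ 2)"
      unfolding summand_row0 by (rule abs_exp_mult_cos_le)
    also have "\<dots> \<le> exp (- s * (real 4 + real 5 * real n))"
    proof -
      have "real n \<le> real n * real n" using le_square[of n] by (metis of_nat_le_iff of_nat_mult)
      hence "real 4 + real 5 * real n \<le> of_int (int (Suc n) + 1) ^ 2"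
        by (simp add: power2_eq_square algebra_simps)
      thus ?thesis using s_pos by simp
    qed
    also have "\<dots> = nome^4 * (nome^5)^n" unfolding nome_def by (rule exp_neg_mult_affine_nat)
    finally show ?thesis .
  qed
  moreover have "0 \<le> nome^5" "nome^5 < 1" using nome_pos nome_less_1 by (auto simp: power_less_one_iff)
  ultimately have "\<bar>\<Sum>n. g_summand \<alpha> y (int (Suc n) + 1, 0)\<bar> \<le> nome^4 / (1 - nome^5)"
    by (rule suminf_geometric_majorant)
  thus ?thesis using row0_eq(2) head by (simp add: abs_le_iff)
qed

lemma exp_row1_le:
  assumes "\<bar>u + 1/2\<bar> \<ge> real n + 3/2"
  shows "exp (- s * ((u + 1/2) ^ 2 + y^2)) \<le> exp (- s * (y^2 + 9/4)) * (nome^3)^n"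
proof -
  have "(real n + 3/2)^2 \<le> (u + 1/2)^2" using power_mono[OF assms, of 2] by simp
  moreover have "9/4 + 3 * real n \<le> (real n + 3/2)^2" by (simp add: power2_eq_square algebra_simps)
  ultimately have "(y^2 + 9/4) + 3 * real n \<le> (u + 1/2) ^ 2 + y^2" by simp
  hence "exp (- s * ((u + 1/2) ^ 2 + y^2)) \<le> exp (- s * ((y^2 + 9/4) + 3 * real n))"
    using s_pos by simp
  also have "\<dots> = exp (- s * (y^2 + 9/4)) * exp (real n * (3 * (- s)))"
    by (subst exp_add[symmetric]) (simp add: algebra_simps)
  also have "\<dots> = exp (- s * (y^2 + 9/4)) * (nome^3)^n"
    by (simp add: exp_of_nat_mult[symmetric] nome_def mult.commute)
  finally show ?thesis .
qed

lemma abs_row1_approx: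
  "\<bar>g_row \<alpha> y 1 - (g_summand \<alpha> y (0,1) + g_summand \<alpha> y (-1,1))\<bar>
     \<le> 2 * (exp (- s * (y^2 + 9/4)) / (1 - nome^3))"
proof -
  note split = infsum_int_split[OF summable_row_terms[of 1]]
  let ?E = "exp (- s * (y^2 + 9/4))"
  have head: "(\<Sum>n. g_summand \<alpha> y (- int n - 1, 1))
     = g_summand \<alpha> y (-1, 1) + (\<Sum>n. g_summand \<alpha> y (- int (Suc n) - 1, 1))"
    using suminf_split_head[OF split(2)] by simp
  have q: "0 \<le> nome^3" "nome^3 < 1" using nome_pos nome_less_1 by (auto simp: power_less_one_iff)
  have "\<bar>g_summand \<alpha> y (int n + 1, 1)\<bar> \<le> ?E * (nome^3)^n" for n
    unfolding summand_row1 by (rule order_trans[OF abs_exp_mult_cos_le exp_row1_le]) simp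
  note right = suminf_geometric_majorant(2)[OF this q]
  have "\<bar>g_summand \<alpha> y (- int (Suc n) - 1, 1)\<bar> \<le> ?E * (nome^3)^n" for n
    unfolding summand_row1 by (rule order_trans[OF abs_exp_mult_cos_le exp_row1_le]) simp
  note left = suminf_geometric_majorant(2)[OF this q]
  show ?thesis using split(3) head right left unfolding g_row_def by (simp add: abs_le_iff)
qed

lemma cos_2pi_a2: "cos (2 * pi * a2 y) = - cos (pi / (4 * y^2))"
proof -
  have "2 * pi * a2 y = pi - pi / (4 * y^2)" using y_pos by (simp add: a2_def field_simps)
  thus ?thesis by simp
qed

lemma summand_01_plus_summand_m11:
  "g_summand \<alpha> y (0,1) + g_summand \<alpha> y (-1,1) = - 2 * exp (- s * (1/4 + y^2)) * sin (pi / (8 * y^2))"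
proof -
  have "2 * pi * a1 y = pi/2 + pi / (8 * y^2)" "2 * pi * (a1 y + a2 y) = 3/2 * pi - pi / (8 * y^2)"
    using y_pos by (simp_all add: a1_def a2_def field_simps)
  hence "cos (2 * pi * a1 y) = - sin (pi / (8 * y^2))" "cos (2 * pi * (a1 y + a2 y)) = - sin (pi / (8 * y^2))"
    using cos_3over2_pi sin_3over2_pi by (simp_all add: cos_add cos_diff)
  moreover have "cos (2 * pi * (- a2 y - a1 y)) = cos (2 * pi * (a1 y + a2 y))"
    by (subst cos_minus[symmetric]) (simp add: algebra_simps)
  ultimately show ?thesis by (simp add: summand_row1 power2_eq_square)
qed

lemma sin_pi_div_8y2_nonneg: "sin (pi / (8 * y^2)) \<ge> 0"
proof (rule sin_ge_zero)
  have "8 * y^2 \<ge> 1" using y_square_ge by simp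
  thus "pi / (8 * y^2) \<le> pi" by (simp add: divide_le_eq)
qed simp

text \<open>The rows \<open>|l| \<ge> 2\<close> and the terms of row \<open>l = 1\<close> other than \<open>k = 0, -1\<close>.\<close>

definition "tail_error = 4 * (exp (- s * (y^2 + 9/4)) / (1 - nome^3)) + 2 * (theta_a * exp (- 4 * b) / (1 - exp (- b)))"

lemma g_le_leading_terms: "g \<alpha> y \<le> 1 - leading_gain \<alpha> y + tail_error"
proof -
  have "exp (- s * (1/4 + y^2)) * sin (pi / (8 * y^2)) \<ge> 0" using sin_pi_div_8y2_nonneg by simp
  thus ?thesis
    using g_eq_rows_decomp abs_row_tail_le abs_row0_approx abs_row1_approx
      summand_01_plus_summand_m11 cos_2pi_a2
    by (simp add: abs_le_iff tail_error_def leading_gain_def nome_def s_def)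
qed

lemma g_ge_leading_terms:
  "g \<alpha> y \<ge> 1 - 2 * nome * cos (pi / (4 * y^2)) - 2 * (nome^4 / (1 - nome^5))
     - 4 * exp (- s * (1/4 + y^2)) * sin (pi / (8 * y^2)) - tail_error"
  using g_eq_rows_decomp abs_row_tail_le abs_row0_approx abs_row1_approx
    summand_01_plus_summand_m11 cos_2pi_a2
  by (simp add: abs_le_iff tail_error_def)

end

lemma pi_bounds: "3.1415 \<le> pi" "pi \<le> 3.1416"
  using pi_approx by simp_all

lemma sqrt_3_bounds: "1.732 \<le> sqrt 3" "sqrt 3 \<le> 1.7321"
proof -
  show "1.732 \<le> sqrt 3" by (rule real_le_rsqrt) (simp add: power2_eq_square)
  have "sqrt 3 \<le> sqrt (1.7321^2)" by (rule real_sqrt_le_mono) (simp add: power2_eq_square)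
  thus "sqrt 3 \<le> 1.7321" by simp
qed

lemma exp_ge_Taylor_power:
  fixes x :: real assumes "x \<ge> 0" "n > 0"
  shows "(1 + x / real n + (x / real n)^2 / 2) ^ n \<le> exp x"
proof -
  have "(1 + x / real n + (x / real n)^2 / 2) ^ n \<le> exp (x / real n) ^ n"
    using exp_lower_Taylor_quadratic[of "x / real n"] assms by (intro power_mono) auto
  also have "\<dots> = exp x" using assms by (simp add: exp_of_nat_mult[symmetric])
  finally show ?thesis .
qed

lemma quartic_ratio_le:
  fixes x :: real assumes "0 \<le> x" "x^3 \<le> c" "x^5 \<le> d" "d < 1"
  shows "2 * (x^4 / (1 - x^5)) \<le> x * (2 * c / (1 - d))"
proof -
  have "2 * x^3 / (1 - x^5) \<le> 2 * c / (1 - d)"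
    using assms order_trans[OF zero_le_power[OF assms(1), of 3] assms(2)] by (intro frac_le) auto
  hence "x * (2 * x^3 / (1 - x^5)) \<le> x * (2 * c / (1 - d))" using assms(1) by (rule mult_left_mono)
  moreover have "x^4 = x * x^3" by algebra
  ultimately show ?thesis by (simp add: mult.left_commute)
qed

lemma one_minus_cos_le: fixes v :: real assumes "v \<ge> 0" shows "1 - cos v \<le> v"
proof -
  have "1 - cos v = 2 * sin (v/2) ^ 2" using cos_double_sin[of "v/2"] by simp
  also have "\<dots> \<le> 2 * \<bar>sin (v/2)\<bar>"
    using mult_left_mono[OF abs_sin_le_one[of "v/2"] abs_ge_zero[of "sin (v/2)"]] by (simp add: power2_eq_square)
  also have "\<dots> \<le> v" using abs_sin_x_le_abs_x[of "v/2"] assms by simp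
  finally show ?thesis .
qed

lemma cos_ge_one_minus_square_div_2: fixes v :: real shows "1 - v^2 / 2 \<le> cos v"
proof -
  have "sin (v/2) ^ 2 \<le> (v/2)^2"
    using abs_sin_x_le_abs_x[of "v/2"] by (metis abs_ge_zero power2_abs power_mono)
  thus ?thesis using cos_double_sin[of "v/2"] by (simp add: power_divide)
qed

text \<open>By log-concavity of \<open>m \<mapsto> exp (- s m\<^sup>2)\<close>, the neighbours of a term sum to at least
  \<open>2 exp (- s)\<close> times it.\<close>

lemma gauss_second_difference_le:
  fixes s :: real assumes "s > 0"
  defines "\<psi> \<equiv> \<lambda>m::nat. exp (- s * real m ^ 2)"
  shows "2 * \<psi> (2*j+2) - \<psi> (2*j+1) - \<psi> (2*j+3) \<le> 2 * (1 - exp (- s)) * exp (- s) ^ 4 * (exp (- s) ^ 4) ^ j"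
proof -
  define q m where "q = exp (- s)" and "m = real (2*j+2)"
  have "\<psi> (2*j+1) + \<psi> (2*j+3) = q * \<psi> (2*j+2) * (exp (2 * s * m) + exp (- (2 * s * m)))"
    unfolding \<psi>_def q_def m_def
    by (simp add: exp_add[symmetric] power2_eq_square algebra_simps numeral_3_eq_3)
  also have "\<dots> \<ge> q * \<psi> (2*j+2) * 2"
    using cosh_real_ge_1[of "2 * s * m"] by (intro mult_left_mono) (auto simp: cosh_def q_def \<psi>_def)
  finally have "2 * \<psi> (2*j+2) - \<psi> (2*j+1) - \<psi> (2*j+3) \<le> 2 * (1 - q) * \<psi> (2*j+2)"
    by (simp add: algebra_simps)
  also have "\<psi> (2*j+2) \<le> q^4 * (q^4)^j"
  proof -
    have "real 4 + real 4 * real j \<le> real (2*j+2) ^ 2" by (simp add: power2_eq_square algebra_simps)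
    hence "\<psi> (2*j+2) \<le> exp (- s * (real 4 + real 4 * real j))" using assms(1) by (simp add: \<psi>_def)
    thus ?thesis unfolding q_def exp_neg_mult_affine_nat .
  qed
  hence "2 * (1 - q) * \<psi> (2*j+2) \<le> 2 * (1 - q) * (q^4 * (q^4)^j)"
    using assms(1) by (intro mult_left_mono) (auto simp: q_def)
  finally show ?thesis by (simp add: q_def mult.assoc)
qed

lemma sums_alternating_pairs:
  fixes \<psi> :: "nat \<Rightarrow> real"
  assumes "summable (\<lambda>n. (-1)^(n+1) * \<psi> (n+1))"
  shows "(\<lambda>j. \<psi> (2*j+2) - \<psi> (2*j+1)) sums (\<Sum>n. (-1)^(n+1) * \<psi> (n+1))"
proof -
  have "(\<lambda>j. \<Sum>n\<in>{j * 2..<j * 2 + 2}. (-1)^(n+1) * \<psi> (n+1)) sums (\<Sum>n. (-1)^(n+1) * \<psi> (n+1))"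
    by (rule sums_group[OF summable_sums[OF assms]]) simp
  moreover have "{j * 2..<j * 2 + 2} = {2*j, 2*j+1}" for j :: nat by auto
  ultimately show ?thesis by (simp add: add.commute mult.commute)
qed

text \<open>Pairing consecutive terms and adding the telescoping series \<open>\<psi> (2j+3) - \<psi> (2j+1)\<close>
  turns the alternating series into a series of the second differences above.\<close>

lemma alternating_gauss_series_le:
  fixes s :: real assumes s: "s > 0"
  defines "q \<equiv> exp (- s)"
  shows "summable (\<lambda>n. (-1)^(n+1) * exp (- s * real (n+1) ^ 2))"
    "1 + 2 * (\<Sum>n. (-1)^(n+1) * exp (- s * real (n+1) ^ 2)) \<le> 1 - q + 2 * (1 - q) * q^4 / (1 - q^4)"
proof -
  define \<psi> where "\<psi> m = exp (- s * real m ^ 2)" for m :: nat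
  define f where "f = (\<lambda>n. (-1)^(n+1) * \<psi> (n+1))"
  have q: "0 < q" "q < 1" using s by (auto simp: q_def)
  have "\<bar>f n\<bar> \<le> q * q ^ n" for n
    using exp_neg_mult_nat_square_le[of s "n+1"] s by (simp add: f_def \<psi>_def q_def abs_mult)
  hence "summable f" by (rule suminf_geometric_majorant(1)) (use q in auto)
  thus "summable (\<lambda>n. (-1)^(n+1) * exp (- s * real (n+1) ^ 2))" unfolding f_def \<psi>_def .
  have pairs: "(\<lambda>j. \<psi> (2*j+2) - \<psi> (2*j+1)) sums suminf f"
    using sums_alternating_pairs \<open>summable f\<close> unfolding f_def .
  have lim: "(\<lambda>j. \<psi> (2*j+1)) \<longlonglongrightarrow> 0"
  proof (rule Lim_null_comparison)
    have "\<psi> (2*j+1) \<le> q ^ j" for j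
      using exp_neg_mult_nat_square_le[of s "2*j+1"] power_decreasing[of j "2*j+1" q] s q
      by (simp add: \<psi>_def q_def)
    thus "\<forall>\<^sub>F j in sequentially. norm (\<psi> (2*j+1)) \<le> q ^ j" by (simp add: \<psi>_def)
  qed (use q in \<open>auto intro: LIMSEQ_power_zero\<close>)
  have tele: "(\<lambda>j. \<psi> (2*(Suc j)+1) - \<psi> (2*j+1)) sums (0 - \<psi> 1)" using telescope_sums[OF lim] by simp
  have "(\<lambda>j. 2 * (\<psi> (2*j+2) - \<psi> (2*j+1)) - (\<psi> (2*(Suc j)+1) - \<psi> (2*j+1))) sums (2 * suminf f - (0 - \<psi> 1))"
    by (rule sums_diff[OF sums_mult[OF pairs] tele])
  moreover have "\<psi> (2*(Suc j)+1) = \<psi> (2*j+3)" for j by (simp add: numeral_3_eq_3)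
  moreover have "\<psi> 1 = q" by (simp add: \<psi>_def q_def)
  ultimately have defects: "(\<lambda>j. 2 * \<psi> (2*j+2) - \<psi> (2*j+1) - \<psi> (2*j+3)) sums (2 * suminf f + q)"
    by (simp add: algebra_simps)
  have geom: "(\<lambda>j. 2 * (1 - q) * q^4 * (q^4)^j) sums (2 * (1 - q) * q^4 * (1 / (1 - q^4)))"
    using q by (intro sums_mult geometric_sums) (auto simp: power_less_one_iff)
  have "2 * suminf f + q \<le> 2 * (1 - q) * q^4 * (1 / (1 - q^4))"
    by (rule sums_le[OF _ defects geom]) (unfold \<psi>_def q_def, rule gauss_second_difference_le[OF s])
  thus "1 + 2 * (\<Sum>n. (-1)^(n+1) * exp (- s * real (n+1) ^ 2)) \<le> 1 - q + 2 * (1 - q) * q^4 / (1 - q^4)"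
    unfolding f_def \<psi>_def by simp
qed

lemma alternating_gauss_bound_le_half:
  fixes q :: real assumes "3/4 \<le> q" "q < 1"
  shows "1 - q + 2 * (1 - q) * q^4 / (1 - q^4) \<le> 1/2"
proof -
  have "(3/4)^3 \<le> q^3" "(3/4)^2 \<le> q^2" using assms by (intro power_mono, simp_all)+
  hence cubic: "0 \<le> 2*q^3 + q^2 - 1" by (simp add: power_divide)
  have denom: "0 < 1 - q^4" using assms by (simp add: power_less_one_iff)
  have "1 - q + 2 * (1 - q) * q^4 / (1 - q^4) - 1/2
      = - ((1 - q) * ((1 - q) * (2*q^3 + q^2 - 1))) / (2 * (1 - q^4))"
    using denom by (simp add: field_simps) (simp add: algebra_simps power2_eq_square power3_eq_cube power4_eq_xxxx)
  moreover have "0 \<le> (1 - q) * ((1 - q) * (2*q^3 + q^2 - 1)) / (2 * (1 - q^4))"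
    using cubic denom assms by (intro divide_nonneg_pos mult_nonneg_nonneg) auto
  ultimately show ?thesis by linarith
qed

lemma gauss_first_moment_le:
  fixes s :: real assumes s: "s > 0"
  shows "summable (\<lambda>n. real (n+1) * exp (- s * real (n+1) ^ 2))"
    "(\<Sum>n. real (n+1) * exp (- s * real (n+1) ^ 2)) \<le> 4 / s^2"
proof -
  define r where "r = exp (- s / 2)"
  have r: "0 \<le> r" "r < 1" using s by (auto simp: r_def)
  have "\<bar>real (n+1) * exp (- s * real (n+1) ^ 2)\<bar> \<le> (2/s * r) * r ^ n" for n
  proof -
    define m where "m = real (n+1)"
    have m1: "m \<ge> 1" by (simp add: m_def)
    have "m * exp (- s * m^2) \<le> m * exp (- s * m)"
      using s m1 by (intro mult_left_mono) (auto simp: power2_eq_square)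
    also have "\<dots> = (s * m / 2 * exp (- (s * m / 2))) * (2 / s) * exp (- (s * m / 2))"
      using s by (simp add: exp_add[symmetric])
    also have "\<dots> \<le> 1 * (2 / s) * exp (- (s * m / 2))"
      using exp_gt_self[of "s * m / 2"] s by (intro mult_right_mono) (auto simp: exp_minus field_simps)
    also have "exp (- (s * m / 2)) = r ^ (n+1)"
      unfolding r_def m_def by (subst exp_of_nat_mult[symmetric]) (simp add: algebra_simps)
    finally show ?thesis using s by (simp add: m_def abs_mult mult.assoc)
  qed
  note geom = suminf_geometric_majorant[OF this r]
  show "summable (\<lambda>n. real (n+1) * exp (- s * real (n+1) ^ 2))" by (rule geom(1))
  have "r * (1 + s/2) \<le> 1"
    using exp_ge_add_one_self[of "s/2"] unfolding r_def by (simp add: exp_minus field_simps)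
  hence "r / (1 - r) \<le> 2 / s" using s r by (simp add: field_simps)
  hence "2/s * (r / (1 - r)) \<le> 2 / s * (2 / s)" using s by (intro mult_left_mono) auto
  with geom(2) show "(\<Sum>n. real (n+1) * exp (- s * real (n+1) ^ 2)) \<le> 4 / s^2"
    by (simp add: abs_le_iff power2_eq_square)
qed

section \<open>Large \<open>y\<close> and the tail\<close>

lemma pi_mult_ge: "\<alpha> \<ge> 3/2 \<Longrightarrow> pi * \<alpha> \<ge> 4.71"
  using pi_bounds mult_mono[of "3.1415" pi "1.5" \<alpha>] by simp

lemma exp_neg_quarter_powers:
  fixes s :: real assumes "s \<ge> 1/4"
  shows "exp (- s) ^ 3 \<le> 0.4924" "exp (- s) ^ 5 \<le> 0.33"
proof -
  have "2.03125 \<le> exp (3/4::real)" "3.03125 \<le> exp (5/4::real)"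
    using exp_lower_Taylor_quadratic[of "3/4"] exp_lower_Taylor_quadratic[of "5/4"]
    by (simp_all add: power2_eq_square)
  hence "exp (- (3/4)) \<le> (0.4924::real)" "exp (- (5/4)) \<le> (0.33::real)"
    by (simp_all add: exp_minus field_simps)
  moreover have "exp (- s) ^ 3 \<le> exp (- (3/4))" "exp (- s) ^ 5 \<le> exp (- (5/4))"
    using assms by (simp_all add: exp_of_nat_mult[symmetric])
  ultimately show "exp (- s) ^ 3 \<le> 0.4924" "exp (- s) ^ 5 \<le> 0.33" by linarith+
qed

context g_params
begin

lemma s_mult_y: "s * y = pi * \<alpha>" using y_pos by (simp add: s_def)

lemma y_ge: "y \<ge> 0.866"
  by (rule power2_le_imp_le) (use y_square_ge y_pos in \<open>simp_all add: power2_eq_square\<close>)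

lemma b_ge: "b \<ge> 3/4 * (pi * \<alpha>)"
proof -
  have "y * (y - 0.75) \<ge> 0.866 * 0.116" using y_ge by (intro mult_mono) auto
  hence "y^2 - 1/12 \<ge> 3/4 * y" by (simp add: power2_eq_square algebra_simps)
  hence "s * (y^2 - 1/12) \<ge> s * (3/4 * y)" using s_pos by (intro mult_left_mono) auto
  thus ?thesis using s_mult_y by (simp add: b_def algebra_simps)
qed

lemma cos_2pi_mult_a2_le: "cos (2 * pi * real m * a2 y) \<le> (-1)^m + pi / (4 * y^2) * real m"
proof -
  define v where "v = pi / (4 * y^2) * real m"
  have "2 * pi * real m * a2 y = real m * pi - v" using y_pos by (simp add: a2_def v_def field_simps)
  hence "cos (2 * pi * real m * a2 y) = (-1)^m * cos v" by (simp add: cos_diff)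
  also have "\<dots> = (-1)^m - (-1)^m * (1 - cos v)" by (simp add: algebra_simps)
  also have "\<dots> \<le> (-1)^m + (1 - cos v)"
  proof -
    have "\<bar>(-1)^m * (1 - cos v)\<bar> = 1 - cos v" by (simp add: abs_mult)
    thus ?thesis by linarith
  qed
  also have "\<dots> \<le> (-1)^m + v" using one_minus_cos_le[of v] by (simp add: v_def)
  finally show ?thesis by (simp add: v_def)
qed

text \<open>For small \<open>s\<close>, the signs of \<open>cos (2 \<pi> k a2)\<close> nearly alternate, so the row \<open>l = 0\<close> is
  close to the theta value \<open>1 + 2 \<Sum>(-1)\<^sup>k exp (- s k\<^sup>2)\<close>, which is small.\<close>

lemma row0_le_of_s_le: assumes "s \<le> 1/4" shows "g_row \<alpha> y 0 \<le> 1/2 + 2 / (pi * \<alpha>^2)"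
proof -
  let ?e = "\<lambda>n. exp (- s * real (n+1) ^ 2)"
  define c where "c = pi / (4 * y^2)"
  have "exp (- s) \<ge> 3/4" using exp_ge_add_one_self[of "- s"] assms by simp
  hence alt: "1 + 2 * (\<Sum>n. (-1)^(n+1) * ?e n) \<le> 1/2"
    using alternating_gauss_series_le(2)[OF s_pos] alternating_gauss_bound_le_half[of "exp (- s)"] s_pos
    by simp
  note alt_summable = alternating_gauss_series_le(1)[OF s_pos]
  note moment = gauss_first_moment_le[OF s_pos]
  have "g_summand \<alpha> y (int n + 1, 0) \<le> (-1)^(n+1) * ?e n + c * (real (n+1) * ?e n)" for n
  proof -
    have "g_summand \<alpha> y (int n + 1, 0) = ?e n * cos (2 * pi * real (n+1) * a2 y)"
      unfolding summand_row0 by (simp add: add.commute)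
    also have "\<dots> \<le> ?e n * ((-1)^(n+1) + c * real (n+1))"
      unfolding c_def by (rule mult_left_mono[OF cos_2pi_mult_a2_le]) simp
    finally show ?thesis by (simp add: algebra_simps)
  qed
  moreover have majorant: "summable (\<lambda>n. (-1)^(n+1) * ?e n + c * (real (n+1) * ?e n))"
    by (intro summable_add alt_summable summable_mult moment(1))
  ultimately have "(\<Sum>n. g_summand \<alpha> y (int n + 1, 0)) \<le> (\<Sum>n. (-1)^(n+1) * ?e n + c * (real (n+1) * ?e n))"
    by (intro suminf_le row0_eq(1))
  also have "\<dots> = (\<Sum>n. (-1)^(n+1) * ?e n) + c * (\<Sum>n. real (n+1) * ?e n)"
    using suminf_add[OF alt_summable summable_mult[OF moment(1)]] suminf_mult[OF moment(1)] by simp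
  also have "c * (\<Sum>n. real (n+1) * ?e n) \<le> c * (4 / s^2)"
    using moment(2) by (intro mult_left_mono) (auto simp: c_def)
  also have "c * (4 / s^2) = 1 / (pi * \<alpha>^2)"
    using y_pos \<alpha>_pos unfolding c_def s_def by (simp add: field_simps power2_eq_square)
  finally show ?thesis using row0_eq(2) alt by simp
qed

lemma theta_a_exp_neg_b_le:
  assumes "\<alpha> \<ge> 3/2" "s \<le> 1/4"
  shows "theta_a * exp (- b) \<le> 0.001" "exp (- b) \<le> 1/2"
proof -
  define u where "u = pi * \<alpha> * y"
  have t: "pi * \<alpha> \<ge> 4.71" using pi_mult_ge[OF assms(1)] .
  have "y \<ge> 4 * (pi * \<alpha>)" using assms(2) y_pos unfolding s_def by (simp add: divide_le_eq)
  hence "u \<ge> 4.71 * (4 * 4.71)" unfolding u_def using t by (intro mult_mono) auto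
  hence u: "u \<ge> 88" by simp
  have "(2 + a) / a = 1 + 8 * u / (pi * \<alpha>)^2"
    using a_pos y_pos \<alpha>_pos by (simp add: a_def s_def u_def field_simps power2_eq_square)
  hence "theta_a \<le> 1 + 8 * u / (pi * \<alpha>)^2" using theta_a_le by simp
  also have "8 * u / (pi * \<alpha>)^2 \<le> 8 * u / 16"
    using power_mono[OF t, of 2] u by (intro divide_left_mono) (auto simp: power2_eq_square)
  finally have theta: "theta_a \<le> u" using u by simp
  have "b \<ge> 3/4 * u"
  proof -
    have "s * (y^2 - 1/12) \<ge> s * (3/4 * y^2)" using y_square_ge s_pos by (intro mult_left_mono) auto
    moreover have "s * (3/4 * y^2) = 3/4 * u" by (simp add: u_def power2_eq_square flip: s_mult_y)
    ultimately show ?thesis by (simp add: b_def)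
  qed
  hence "exp (3/4 * u) \<le> exp b" by simp
  moreover have "(1 + (3/4 * u) / real 2 + ((3/4 * u) / real 2)^2 / 2)^2 \<le> exp (3/4 * u)"
    by (rule exp_ge_Taylor_power) (use u in auto)
  ultimately have "exp b \<ge> (1 + (3/4 * u) / real 2 + ((3/4 * u) / real 2)^2 / 2)^2" by linarith
  moreover have "((3/4 * u)^2 / 8)^2 \<le> (1 + (3/4 * u) / real 2 + ((3/4 * u) / real 2)^2 / 2)^2"
    using u by (intro power_mono) (auto simp: power2_eq_square)
  ultimately have expb: "exp b \<ge> (3/4 * u)^4 / 64" by (simp add: power2_eq_square power4_eq_xxxx)
  have "theta_a * exp (- b) = theta_a / exp b" by (simp add: exp_minus field_simps)
  also have "\<dots> \<le> u / ((3/4 * u)^4 / 64)" using theta expb theta_a_nonneg u by (intro frac_le) auto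
  also have "\<dots> = 16384 / (81 * u^3)" using u by (simp add: field_simps power4_eq_xxxx power3_eq_cube)
  also have "\<dots> \<le> 16384 / (81 * 88^3)" using power_mono[OF u, of 3] u by (intro divide_left_mono) auto
  finally show "theta_a * exp (- b) \<le> 0.001" by simp
  have "2 \<le> exp b" using exp_ge_add_one_self[of b] \<open>b \<ge> 3/4 * u\<close> u by linarith
  thus "exp (- b) \<le> 1/2" by (simp add: exp_minus field_simps)
qed

lemma g_le_of_s_le: assumes "\<alpha> \<ge> 3/2" "s \<le> 1/4" shows "g \<alpha> y \<le> 0.8"
proof -
  note small = theta_a_exp_neg_b_le[OF assms]
  have "theta_a * exp (- 4 * b) / (1 - exp (- b)) \<le> theta_a * exp (- b) / (1/2)"
    using small(2) b_pos theta_a_nonneg by (intro frac_le mult_left_mono) auto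
  hence tail: "\<bar>\<Sum>n. g_row \<alpha> y (int n + 2)\<bar> \<le> 0.002" using abs_row_tail_le small(1) by simp
  have "\<bar>g_row \<alpha> y 1\<bar> \<le> 0.001" using abs_row_le[of 1] small(1) by simp
  moreover have "2 / (pi * \<alpha>^2) \<le> 0.2831"
  proof -
    have "3.1415 * 1.5^2 \<le> pi * \<alpha>^2"
      using pi_bounds power_mono[of "1.5" \<alpha> 2] assms(1) by (intro mult_mono) auto
    hence "2 / (pi * \<alpha>^2) \<le> 2 / (3.1415 * 1.5^2)" by (intro divide_left_mono) (use \<alpha>_pos in auto)
    also have "\<dots> \<le> 0.2831" by (simp add: divide_le_eq power2_eq_square)
    finally show ?thesis .
  qed
  ultimately show ?thesis
    using g_eq_rows_decomp row0_le_of_s_le[OF assms(2)] tail by (simp add: abs_le_iff)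
qed

lemma tail_error_le: assumes "\<alpha> \<ge> 3/2" "s \<ge> 1/4" shows "tail_error \<le> 140 * exp (- 3 * (pi * \<alpha>))"
proof -
  define t where "t = pi * \<alpha>"
  have t: "t \<ge> 4.71" using pi_mult_ge[OF assms(1)] by (simp add: t_def)
  have "s * (y^2 + 9/4) - 3 * (s * y) = s * (y - 3/2)^2" by (simp add: power2_eq_square algebra_simps)
  hence "s * (y^2 + 9/4) \<ge> 3 * t" using s_pos s_mult_y by (simp add: t_def) (smt (verit) zero_le_mult_iff zero_le_power2)
  moreover have "nome^3 \<le> 1/2" using exp_neg_quarter_powers(1)[OF assms(2)] by (simp add: nome_def)
  ultimately have row1: "4 * (exp (- s * (y^2 + 9/4)) / (1 - nome^3)) \<le> 4 * (exp (- 3 * t) / (1/2))"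
    by (intro mult_left_mono frac_le) auto
  have "theta_a \<le> 2 / a + 1" using theta_a_le a_pos by (simp add: field_simps)
  also have "2 / a \<le> 2 / (1/16)" using assms(2) by (intro divide_left_mono) (auto simp: a_def)
  finally have "theta_a \<le> 33" by simp
  moreover have b: "b \<ge> 3/4 * t" using b_ge by (simp add: t_def)
  hence "exp (- 4 * b) \<le> exp (- 3 * t)" by simp
  ultimately have "theta_a * exp (- 4 * b) \<le> 33 * exp (- 3 * t)"
    using theta_a_nonneg by (intro mult_mono) auto
  moreover have "exp (- b) \<le> 1/2"
  proof -
    have "1 \<le> b" using b t by simp
    hence "2 \<le> exp b" using exp_ge_add_one_self[of b] by linarith
    thus ?thesis by (simp add: exp_minus field_simps)
  qed
  ultimately have "theta_a * exp (- 4 * b) / (1 - exp (- b)) \<le> (33 * exp (- 3 * t)) / (1/2)"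
    using theta_a_nonneg by (intro frac_le) auto
  thus ?thesis using row1 by (simp add: tail_error_def t_def)
qed

end

section \<open>Comparison with the point \<open>\<surd>3/2\<close>\<close>

definition right_end :: "real \<Rightarrow> real" where
  "right_end \<alpha> = sqrt 3 / 2 + 1 / (4 * sqrt \<alpha>)"

lemma right_end_bounds:
  assumes "\<alpha> \<ge> 3/2"
  shows "sqrt 3 / 2 \<le> right_end \<alpha>" "right_end \<alpha> \<le> 1.0702" "\<alpha> < 3.5 \<Longrightarrow> 0.9996 \<le> right_end \<alpha>"
proof -
  have sa: "1.2247 \<le> sqrt \<alpha>" by (rule real_le_rsqrt) (use assms in \<open>simp add: power2_eq_square\<close>)
  show "sqrt 3 / 2 \<le> right_end \<alpha>" using sa assms by (simp add: right_end_def)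
  have "1 / (4 * sqrt \<alpha>) \<le> 1 / (4 * 1.2247)" using sa assms by (intro divide_left_mono) auto
  thus "right_end \<alpha> \<le> 1.0702" using sqrt_3_bounds by (simp add: right_end_def)
  assume "\<alpha> < 3.5"
  hence "sqrt \<alpha> \<le> sqrt (1.871^2)" by (intro real_sqrt_le_mono) (simp add: power2_eq_square)
  hence "1 / (4 * 1.871) \<le> 1 / (4 * sqrt \<alpha>)" using sa assms by (intro divide_left_mono) auto
  thus "0.9996 \<le> right_end \<alpha>" using sqrt_3_bounds by (simp add: right_end_def)
qed

lemma cos_pi_div_4_square_mono:
  assumes "sqrt 3 / 2 \<le> y1" "y1 \<le> y"
  shows "cos (pi / (4 * y1^2)) \<le> cos (pi / (4 * y^2))"
proof -
  have "(sqrt 3 / 2)^2 \<le> y1^2" using assms(1) by (intro power_mono) auto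
  hence y1: "3/4 \<le> y1^2" by (simp add: power_divide)
  have "y1^2 \<le> y^2" using assms sqrt_3_bounds by (intro power_mono) auto
  hence "pi / (4 * y^2) \<le> pi / (4 * y1^2)" using y1 by (intro divide_left_mono mult_pos_pos) auto
  moreover have "pi / (4 * y1^2) \<le> pi" using y1 by (simp add: divide_le_eq)
  ultimately show ?thesis by (subst cos_mono_le_eq) auto
qed

lemma exponent_gap_ge:
  assumes "\<alpha> \<ge> 3/2"
  shows "1.0375 \<le> pi * \<alpha> / (sqrt 3 / 2) - pi * \<alpha> / right_end \<alpha>"
    "\<alpha> \<ge> 3.5 \<Longrightarrow> 1.58 \<le> pi * \<alpha> / (sqrt 3 / 2) - pi * \<alpha> / right_end \<alpha>"
proof -
  define y0 y1 where "y0 = sqrt 3 / 2" and "y1 = right_end \<alpha>"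
  have y0: "0.866 \<le> y0" "y0 \<le> 0.86605" using sqrt_3_bounds by (simp_all add: y0_def)
  have y1: "y0 \<le> y1" "y1 \<le> 1.0702" using right_end_bounds[OF assms] by (simp_all add: y0_def y1_def)
  have sa: "sqrt \<alpha> > 0" using assms by simp
  have "pi * \<alpha> / y0 - pi * \<alpha> / y1 = pi * \<alpha> * (y1 - y0) / (y0 * y1)"
    using y0 y1 by (simp add: field_simps)
  also have "\<dots> = pi * (sqrt \<alpha> * sqrt \<alpha>) * (1 / (4 * sqrt \<alpha>)) / (y0 * y1)"
    using assms by (simp add: y0_def y1_def right_end_def)
  also have "\<dots> = pi * sqrt \<alpha> / (4 * y0 * y1)" using sa y0 y1 by (simp add: field_simps)
  finally have gap: "pi * \<alpha> / y0 - pi * \<alpha> / y1 = pi * sqrt \<alpha> / (4 * y0 * y1)" .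
  have den: "4 * y0 * y1 \<le> 4 * 0.86605 * 1.0702" using y0 y1 by (intro mult_mono) auto
  have bound: "3.1415 * c / (4 * 0.86605 * 1.0702) \<le> pi * \<alpha> / y0 - pi * \<alpha> / y1"
    if "c \<le> sqrt \<alpha>" "c \<ge> 0" for c
    unfolding gap using that pi_bounds den y0 y1 sa by (intro frac_le mult_mono) auto
  have "1.2247 \<le> sqrt \<alpha>" by (rule real_le_rsqrt) (use assms in \<open>simp add: power2_eq_square\<close>)
  from bound[OF this] show "1.0375 \<le> pi * \<alpha> / (sqrt 3 / 2) - pi * \<alpha> / right_end \<alpha>"
    by (simp add: y0_def y1_def)
  assume "\<alpha> \<ge> 3.5"
  hence "1.87 \<le> sqrt \<alpha>" by (intro real_le_rsqrt) (simp add: power2_eq_square)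
  from bound[OF this] show "1.58 \<le> pi * \<alpha> / (sqrt 3 / 2) - pi * \<alpha> / right_end \<alpha>"
    by (simp add: y0_def y1_def)
qed

lemma cos_right_end_ge:
  assumes "\<alpha> \<ge> 3/2"
  shows "1/2 \<le> cos (pi / (4 * right_end \<alpha>^2))" "\<alpha> < 3.5 \<Longrightarrow> 0.691 \<le> cos (pi / (4 * right_end \<alpha>^2))"
proof -
  have "cos (pi / (4 * (sqrt 3 / 2)^2)) \<le> cos (pi / (4 * right_end \<alpha>^2))"
    using right_end_bounds(1)[OF assms] by (intro cos_pi_div_4_square_mono) auto
  thus "1/2 \<le> cos (pi / (4 * right_end \<alpha>^2))" by (simp add: power_divide cos_60)
  assume "\<alpha> < 3.5"
  hence "0.9996^2 \<le> right_end \<alpha>^2" using right_end_bounds(3)[OF assms] by (intro power_mono) auto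
  hence "pi / (4 * right_end \<alpha>^2) \<le> 3.1416 / (4 * 0.9996^2)" using pi_bounds by (intro frac_le) auto
  also have "\<dots> \<le> 0.7861" by (simp add: divide_le_eq power2_eq_square)
  finally have "(pi / (4 * right_end \<alpha>^2))^2 \<le> 0.7861^2" by (intro power_mono) auto
  thus "0.691 \<le> cos (pi / (4 * right_end \<alpha>^2))"
    using cos_ge_one_minus_square_div_2[of "pi / (4 * right_end \<alpha>^2)"] by (simp add: power2_eq_square)
qed

lemma gain_factor_at_right_end:
  assumes "\<alpha> \<ge> 3/2"
  shows "3.5 \<le> exp (pi * \<alpha> / (sqrt 3 / 2) - pi * \<alpha> / right_end \<alpha>) * (2 * cos (pi / (4 * right_end \<alpha>^2)) - 0.02)"
    (is "_ \<le> exp ?gap * ?c")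
proof (cases "\<alpha> \<ge> 3.5")
  case True
  have "exp (1.58::real) \<ge> 4.4" using exp_ge_Taylor_power[of "1.58" 2] by (simp add: power2_eq_square)
  hence "4.4 \<le> exp ?gap" using exponent_gap_ge(2)[OF assms True] by (smt (verit) exp_le_cancel_iff)
  moreover have "0.98 \<le> ?c" using cos_right_end_ge(1)[OF assms] by simp
  ultimately have "4.4 * 0.98 \<le> exp ?gap * ?c" by (intro mult_mono) auto
  thus ?thesis by simp
next
  case False
  have "exp (1.0375::real) \<ge> 2.73" using exp_ge_Taylor_power[of "1.0375" 2] by (simp add: power2_eq_square)
  hence "2.73 \<le> exp ?gap" using exponent_gap_ge(1)[OF assms] by (smt (verit) exp_le_cancel_iff)
  moreover have "1.362 \<le> ?c" using cos_right_end_ge(2)[OF assms] False by simp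
  ultimately have "2.73 * 1.362 \<le> exp ?gap * ?c" by (intro mult_mono) auto
  thus ?thesis by simp
qed

lemma leading_gain_near:
  assumes "\<alpha> \<ge> 3/2" "y \<ge> right_end \<alpha>" "exp (- (pi * \<alpha> / y)) \<le> 1/5"
  shows "leading_gain \<alpha> y \<ge> 3.5 * exp (- (pi * \<alpha> / (sqrt 3 / 2)))"
proof -
  define y1 where "y1 = right_end \<alpha>"
  define x x1 where "x = exp (- (pi * \<alpha> / y))" and "x1 = exp (- (pi * \<alpha> / y1))"
  define c c1 where "c = cos (pi / (4 * y^2))" and "c1 = cos (pi / (4 * y1^2))"
  have y1: "sqrt 3 / 2 \<le> y1" using right_end_bounds(1)[OF assms(1)] by (simp add: y1_def)
  moreover have "0 < sqrt 3 / (2::real)" by simp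
  ultimately have y1_pos: "y1 > 0" by linarith
  have y: "y1 \<le> y" using assms(2) by (simp add: y1_def)
  have "pi * \<alpha> / y \<le> pi * \<alpha> / y1" using y y1_pos assms(1) by (intro divide_left_mono) auto
  hence "x1 \<le> x" by (simp add: x_def x1_def)
  have "c1 \<le> c" unfolding c_def c1_def using y1 y by (rule cos_pi_div_4_square_mono)
  have "2 * (x^4 / (1 - x^5)) \<le> 0.02 * x"
  proof -
    have x: "0 < x" "x \<le> 1/5" using assms(3) by (simp_all add: x_def)
    hence "x^3 \<le> (1/5)^3" "x^5 \<le> (1/5)^5" by (intro power_mono, simp_all)+
    with x quartic_ratio_le[of x "(1/5)^3" "(1/5)^5"] show ?thesis by (simp add: power_divide)
  qed
  hence gain: "x * (2 * c - 0.02) \<le> leading_gain \<alpha> y"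
    unfolding leading_gain_def x_def[symmetric] c_def[symmetric] by (simp add: algebra_simps)
  have factor: "3.5 \<le> exp (pi * \<alpha> / (sqrt 3 / 2) - pi * \<alpha> / y1) * (2 * c1 - 0.02)"
    using gain_factor_at_right_end[OF assms(1)] by (simp add: y1_def c1_def)
  hence "0 < exp (pi * \<alpha> / (sqrt 3 / 2) - pi * \<alpha> / y1) * (2 * c1 - 0.02)" by linarith
  hence c1: "0 \<le> 2 * c1 - 0.02" by (simp add: zero_less_mult_iff)
  have "exp (- (pi * \<alpha> / (sqrt 3 / 2))) * 3.5
      \<le> exp (- (pi * \<alpha> / (sqrt 3 / 2))) * (exp (pi * \<alpha> / (sqrt 3 / 2) - pi * \<alpha> / y1) * (2 * c1 - 0.02))"
    using factor by (intro mult_left_mono) auto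
  also have "\<dots> = x1 * (2 * c1 - 0.02)" by (simp add: x1_def exp_add[symmetric])
  also have "\<dots> \<le> x * (2 * c - 0.02)"
    using \<open>x1 \<le> x\<close> \<open>c1 \<le> c\<close> c1 by (intro mult_mono) (auto simp: x1_def x_def)
  also note gain
  finally show ?thesis by simp
qed

lemma leading_gain_far:
  assumes "\<alpha> \<ge> 3/2" "y > 0" "pi * \<alpha> / y \<ge> 1/4" "exp (- (pi * \<alpha> / y)) \<ge> 1/5"
  shows "leading_gain \<alpha> y \<ge> 0.035"
proof -
  define s x c where "s = pi * \<alpha> / y" and "x = exp (- s)" and "c = cos (pi / (4 * y^2))"
  have "s \<le> 2"
  proof (rule ccontr)
    assume "\<not> s \<le> 2"
    hence "5 < exp s" using exp_lower_Taylor_quadratic[of s] power_strict_mono[of 2 s 2] by simp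
    thus False using assms(4) by (simp add: s_def exp_minus field_simps)
  qed
  hence "y \<ge> 4.71 / 2" using pi_mult_ge[OF assms(1)] assms(2,3) by (simp add: s_def field_simps)
  hence "2.355^2 \<le> y^2" by (intro power_mono) auto
  hence "pi / (4 * y^2) \<le> 3.1416 / (4 * 2.355^2)" using pi_bounds by (intro frac_le) auto
  also have "\<dots> \<le> 0.1417" by (simp add: divide_le_eq power2_eq_square)
  finally have "(pi / (4 * y^2))^2 \<le> 0.1417^2" by (intro power_mono) auto
  hence c: "c \<ge> 0.985"
    using cos_ge_one_minus_square_div_2[of "pi / (4 * y^2)"] by (simp add: c_def power2_eq_square)
  have "2 * (x^4 / (1 - x^5)) \<le> x * (2 * 0.4924 / (1 - 0.33))"
    using exp_neg_quarter_powers[of s] assms(3) by (intro quartic_ratio_le) (auto simp: s_def x_def)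
  also have "x * (2 * 0.4924 / (1 - 0.33)) \<le> x * 1.47" by (intro mult_left_mono) (auto simp: x_def)
  finally have "2 * (x^4 / (1 - x^5)) \<le> x * 1.47" .
  hence "leading_gain \<alpha> y \<ge> x * (2 * c - 1.47)"
    unfolding leading_gain_def s_def[symmetric] x_def[symmetric] c_def[symmetric] by (simp add: algebra_simps)
  moreover have "x * (2 * c - 1.47) \<ge> (1/5) * 0.5" using assms(4) c by (intro mult_mono) (auto simp: x_def s_def)
  ultimately show ?thesis by simp
qed

lemma exp_neg_hex_bounds:
  assumes "\<alpha> \<ge> 3/2"
  shows "exp (- (pi * \<alpha> / (sqrt 3 / 2))) \<le> 1/100"
    "280 * exp (- 3 * (pi * \<alpha>)) \<le> exp (- (pi * \<alpha> / (sqrt 3 / 2))) / 4"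
proof -
  define t where "t = pi * \<alpha>"
  have t: "t \<ge> 4.71" using pi_mult_ge[OF assms] by (simp add: t_def)
  have hex: "pi * \<alpha> / (sqrt 3 / 2) = 2 * t / sqrt 3" by (simp add: t_def)
  have "2 * 4.71 / 1.7321 \<le> 2 * t / sqrt 3" using t sqrt_3_bounds by (intro frac_le) auto
  moreover have "(5.43::real) \<le> 2 * 4.71 / 1.7321" by (simp add: le_divide_eq)
  moreover have "exp (5.43::real) \<ge> 100"
    using exp_ge_Taylor_power[of "5.43" 4] by (simp add: power_divide)
  ultimately have "exp (2 * t / sqrt 3) \<ge> 100" by (smt (verit) exp_le_cancel_iff)
  thus "exp (- (pi * \<alpha> / (sqrt 3 / 2))) \<le> 1/100" unfolding hex by (simp add: exp_minus field_simps)
  have "2 * t / sqrt 3 \<le> 2 * t / 1.732" using t sqrt_3_bounds by (intro divide_left_mono) auto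
  hence "8.69 \<le> 3 * t - 2 * t / sqrt 3" using t by simp
  moreover have "exp (8.69::real) \<ge> 1120"
    using exp_ge_Taylor_power[of "8.69" 8] by (simp add: power_divide)
  ultimately have "1120 \<le> exp (3 * t - 2 * t / sqrt 3)" by (smt (verit) exp_le_cancel_iff)
  hence "1120 * exp (- 3 * t) \<le> exp (3 * t - 2 * t / sqrt 3) * exp (- 3 * t)" by (intro mult_right_mono) auto
  also have "\<dots> = exp (- (2 * t / sqrt 3))" by (simp add: exp_add[symmetric])
  finally show "280 * exp (- 3 * (pi * \<alpha>)) \<le> exp (- (pi * \<alpha> / (sqrt 3 / 2))) / 4"
    unfolding hex t_def[symmetric] by (simp add: mult.commute)
qed

lemma g_at_hex_ge:
  assumes "\<alpha> \<ge> 3/2"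
  shows "g \<alpha> (sqrt 3 / 2) \<ge> 1 - 27/8 * exp (- (pi * \<alpha> / (sqrt 3 / 2)))"
proof -
  define w where "w = exp (- (pi * \<alpha> / (sqrt 3 / 2)))"
  have hex_sq: "(sqrt 3 / 2)^2 = 3/4" by (simp add: power_divide)
  interpret hex: g_params \<alpha> "sqrt 3 / 2" by unfold_locales (use assms hex_sq in auto)
  have nome: "hex.nome = w" by (simp add: hex.nome_def hex.s_def w_def)
  have "hex.s \<ge> 4.71 / 1" unfolding hex.s_def
    using pi_mult_ge[OF assms] sqrt_3_bounds by (intro frac_le) auto
  hence "hex.tail_error \<le> w / 8"
    using hex.tail_error_le[OF assms] exp_neg_hex_bounds(2)[OF assms] by (simp add: w_def)
  moreover have "2 * (w^4 / (1 - w^5)) \<le> w / 4"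
  proof -
    have w: "0 < w" "w \<le> 1/100" using exp_neg_hex_bounds(1)[OF assms] by (simp_all add: w_def)
    hence "w^3 \<le> (1/100)^3" "w^5 \<le> (1/100)^5" by (intro power_mono, simp_all)+
    with w quartic_ratio_le[of w "(1/100)^3" "(1/100)^5"] show ?thesis by (simp add: power_divide)
  qed
  moreover have trig: "cos (pi / (4 * (sqrt 3 / 2)^2)) = 1/2" "sin (pi / (8 * (sqrt 3 / 2)^2)) = 1/2"
    by (simp_all add: hex_sq cos_60 sin_30)
  moreover have "exp (- hex.s * (1/4 + (sqrt 3 / 2)^2)) = w" using nome by (simp add: hex_sq hex.nome_def)
  ultimately have "1 - 27/8 * w \<le> g \<alpha> (sqrt 3 / 2)"
    using hex.g_ge_leading_terms unfolding nome trig by simp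
  thus ?thesis by (simp add: w_def)
qed

lemma g_le_g_at_hex:
  assumes "\<alpha> \<ge> 3/2" "y \<ge> right_end \<alpha>"
  shows "g \<alpha> y \<le> g \<alpha> (sqrt 3 / 2)"
proof -
  define w where "w = exp (- (pi * \<alpha> / (sqrt 3 / 2)))"
  note hex_bounds = exp_neg_hex_bounds[OF assms(1), folded w_def]
  have "sqrt 3 / 2 \<le> y" using right_end_bounds(1)[OF assms(1)] assms(2) by simp
  moreover have "0 < sqrt 3 / (2::real)" by simp
  ultimately have y: "0 < y" "(sqrt 3 / 2)^2 \<le> y^2" by (linarith, intro power_mono, simp_all)
  hence y: "0 < y" "3/4 \<le> y^2" by (simp_all add: power_divide)
  interpret g_params \<alpha> y by unfold_locales (use assms(1) y in auto)
  have lower: "g \<alpha> (sqrt 3 / 2) \<ge> 1 - 27/8 * w" using g_at_hex_ge[OF assms(1)] by (simp add: w_def)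
  show ?thesis
  proof (cases "s \<le> 1/4")
    case True
    thus ?thesis using g_le_of_s_le[OF assms(1)] lower hex_bounds(1) by simp
  next
    case False
    have "leading_gain \<alpha> y \<ge> 3.5 * w"
    proof (cases "exp (- (pi * \<alpha> / y)) \<le> 1/5")
      case True
      thus ?thesis using leading_gain_near[OF assms] by (simp add: w_def)
    next
      case False
      hence "leading_gain \<alpha> y \<ge> 0.035"
        using leading_gain_far[OF assms(1) y(1)] \<open>\<not> s \<le> 1/4\<close> by (simp add: s_def)
      thus ?thesis using hex_bounds(1) by simp
    qed
    thus ?thesis using g_le_leading_terms tail_error_le[OF assms(1)] False lower hex_bounds(2) by simp
  qed
qed

section \<open>Continuity and the maximum\<close>

lemma abs_g_summand_le_uniform:
  assumes "\<alpha> > 0" "sqrt 3 / 2 \<le> y" "y \<le> Y"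
  shows "\<bar>g_summand \<alpha> y (k,l)\<bar>
    \<le> exp (- (pi * \<alpha> / Y / 4) * of_int k ^ 2) * exp (- (3/4 * (pi * \<alpha>)) * of_int l ^ 2)"
proof -
  have "0 < sqrt 3 / (2::real)" by simp
  hence y: "0 < y" "(sqrt 3 / 2)^2 \<le> y^2" using assms(2) by (linarith, intro power_mono, simp_all)
  interpret g_params \<alpha> y by unfold_locales (use assms(1) y in \<open>auto simp: power_divide\<close>)
  have a: "pi * \<alpha> / Y / 4 \<le> a" unfolding a_def s_def using assms y by (intro divide_right_mono divide_left_mono) auto
  hence "exp (- a * of_int k ^ 2) \<le> exp (- (pi * \<alpha> / Y / 4) * of_int k ^ 2)"
    using mult_right_mono[OF a, of "of_int k ^ 2"] by simp
  moreover have "exp (- b * of_int l ^ 2) \<le> exp (- (3/4 * (pi * \<alpha>)) * of_int l ^ 2)"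
    using mult_right_mono[OF b_ge, of "of_int l ^ 2"] by simp
  ultimately show ?thesis using abs_summand_le[of k l] by (smt (verit) exp_gt_zero mult_mono)
qed

lemma continuous_on_g: assumes "\<alpha> > 0" shows "continuous_on {sqrt 3 / 2..Y} (g \<alpha>)"
proof (cases "sqrt 3 / 2 \<le> Y")
  case True
  define M where "M = (\<lambda>(k::int, l::int). exp (- (pi * \<alpha> / Y / 4) * of_int k ^ 2) * exp (- (3/4 * (pi * \<alpha>)) * of_int l ^ 2))"
  have "0 < sqrt 3 / (2::real)" by simp
  hence Y: "Y > 0" using True by linarith
  have "0 < pi * \<alpha> / Y / 4" "0 < 3/4 * (pi * \<alpha>)" using assms Y by simp_all
  from summable_on_product_nonneg[OF gaussian_summable_on_int[OF this(1)] gaussian_summable_on_int[OF this(2)]]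
  have "M summable_on UNIV" unfolding M_def by simp
  hence "uniform_limit {sqrt 3 / 2..Y} (\<lambda>X y. \<Sum>x\<in>X. g_summand \<alpha> y x) (\<lambda>y. \<Sum>\<^sub>\<infinity>x. g_summand \<alpha> y x)
           (finite_subsets_at_top UNIV)"
    by (rule Weierstrass_m_test_general[rotated])
       (use abs_g_summand_le_uniform[OF assms] in \<open>auto simp: M_def split: prod.split\<close>)
  moreover have "continuous_on {sqrt 3 / 2..Y} (\<lambda>y. \<Sum>x\<in>X. g_summand \<alpha> y x)" for X
  proof (intro continuous_on_sum)
    have "continuous_on {0<..} (\<lambda>y. g_summand \<alpha> y x)" for x
      unfolding g_summand_def a1_def a2_def by (cases x) (auto intro!: continuous_intros)
    moreover have "{sqrt 3 / 2..Y} \<subseteq> {0<..}"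
      using sqrt_3_bounds by auto
    ultimately show "continuous_on {sqrt 3 / 2..Y} (\<lambda>y. g_summand \<alpha> y x)" for x
      by (rule continuous_on_subset)
  qed
  ultimately have "continuous_on {sqrt 3 / 2..Y} (\<lambda>y. \<Sum>\<^sub>\<infinity>x. g_summand \<alpha> y x)"
    by (intro uniform_limit_theorem) auto
  thus ?thesis by (simp add: g_eq_infsum_summand[abs_def])
qed simp

theorem mainTheorem18:
  fixes \<alpha> :: real
  assumes "\<alpha> \<ge> 1.5"
  shows "\<exists>y0. sqrt 3 / 2 \<le> y0 \<and> y0 \<le> sqrt 3 / 2 + 1 / (4 * sqrt \<alpha>) \<and>
             (\<forall>y. y \<ge> sqrt 3 / 2 \<longrightarrow> g \<alpha> y \<le> g \<alpha> y0)"
proof -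
  have \<alpha>: "\<alpha> \<ge> 3/2" using assms by simp
  have interval: "sqrt 3 / 2 \<le> right_end \<alpha>" by (rule right_end_bounds(1)[OF \<alpha>])
  have "\<exists>y0\<in>{sqrt 3 / 2..right_end \<alpha>}. \<forall>y\<in>{sqrt 3 / 2..right_end \<alpha>}. g \<alpha> y \<le> g \<alpha> y0"
    using continuous_attains_sup[OF compact_Icc _ continuous_on_g[of \<alpha> "right_end \<alpha>"]] interval \<alpha> by simp
  then obtain y0 where y0: "y0 \<in> {sqrt 3 / 2..right_end \<alpha>}"
    and max: "\<forall>y\<in>{sqrt 3 / 2..right_end \<alpha>}. g \<alpha> y \<le> g \<alpha> y0" ..
  have "g \<alpha> y \<le> g \<alpha> y0" if "sqrt 3 / 2 \<le> y" for y
  proof (cases "y \<le> right_end \<alpha>")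
    case True
    thus ?thesis using max that by auto
  next
    case False
    hence "g \<alpha> y \<le> g \<alpha> (sqrt 3 / 2)" using g_le_g_at_hex[OF \<alpha>] by simp
    also have "\<dots> \<le> g \<alpha> y0" using max interval by auto
    finally show ?thesis .
  qed
  thus ?thesis using y0 by (auto simp: right_end_def)
qed

end
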